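(* For every $n\ge0$, $$|\mathcal{B}_{n+1}(213)|=\sum_{j=0}^{n}|\mathcal{G}(n;0,j)|.$$
   Context: A ballot permutation is a $\pi\in\mathfrak{S}_m$ such that every prefix $\pi_1\cdots\pi_i$ has at most as many descents ($\pi_j>\pi_{j+1}$) as ascents ($\pi_j<\pi_{j+1}$); $\mathcal{B}_m$ denotes the set of them, and $\mathcal{B}_m(213)$ the subset of those having no subsequence order-isomorphic to $213$. A Gessel walk is a lattice path confined to $\mathbb{N}^2$ with steps from $\{(0,1),(0,-1),(1,1),(-1,-1)\}$. $\mathcal{G}(n;i,j)$ is the set of $n$-step Gessel walks starting at $(0,i)$ and ending at $(0,j)$. *)

theory Defs
  imports "HOL-Combinatorics.Multiset_Permutations"
begin

(* Permutations of [m] = {1..m} are represented in one-line notation as lists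
   pi = [pi_1,...,pi_m]; list index k (0-based) corresponds to position k+1. *)

definition descents_prefix :: "nat list \<Rightarrow> nat \<Rightarrow> nat" where
  "descents_prefix p i = card {j. j + 1 < i \<and> p ! j > p ! (j + 1)}"

definition ascents_prefix :: "nat list \<Rightarrow> nat \<Rightarrow> nat" where
  "ascents_prefix p i = card {j. j + 1 < i \<and> p ! j < p ! (j + 1)}"

definition is_ballot :: "nat list \<Rightarrow> bool" where
  "is_ballot p \<longleftrightarrow> (\<forall>i \<le> length p. descents_prefix p i \<le> ascents_prefix p i)"

definition ballot_perms :: "nat \<Rightarrow> nat list set" where
  "ballot_perms m = {p \<in> permutations_of_set {1..m}. is_ballot p}"

definition contains_213 :: "nat list \<Rightarrow> bool" where
  "contains_213 p \<longleftrightarrow> (\<exists>i j k. i < j \<and> j < k \<and> k < length p \<and>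
                              p ! j < p ! i \<and> p ! i < p ! k)"

definition ballot_perms_213 :: "nat \<Rightarrow> nat list set" where
  "ballot_perms_213 m = {p \<in> ballot_perms m. \<not> contains_213 p}"

definition gessel_steps :: "(int \<times> int) set" where
  "gessel_steps = {(0, 1), (0, -1), (1, 1), (-1, -1)}"

definition walk_pos :: "int \<times> int \<Rightarrow> (int \<times> int) list \<Rightarrow> nat \<Rightarrow> int \<times> int" where
  "walk_pos s ws t = (fst s + sum_list (map fst (take t ws)), snd s + sum_list (map snd (take t ws)))"

definition gessel_walks :: "nat \<Rightarrow> nat \<Rightarrow> nat \<Rightarrow> (int \<times> int) list set" where
  "gessel_walks n i j = {ws. length ws = n \<and> set ws \<subseteq> gessel_steps \<and>
      (\<forall>t \<le> n. fst (walk_pos (0, int i) ws t) \<ge> 0 \<and> snd (walk_pos (0, int i) ws t) \<ge> 0) \<and>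
      walk_pos (0, int i) ws n = (0, int j)}"

end

theory Submission
  imports Defs
begin

text \<open>A 213-avoiding permutation of [n+1] is built letter by letter: appending a new last
  value v and shifting the earlier values \<open>\<ge> v\<close> up by one keeps it 213-avoiding iff v is at most
  one more than the previous last value, and changes its balance (ascents minus descents) by +1
  for an ascent and -1 for a descent; the ballot condition says the balance never gets negative.
  Give a permutation with last value k+1 and balance b the weight \<open>k choose h\<close> at the point (h, b).
  For an ascent the weight \<open>Suc k choose h = (k choose h) + (k choose (h - 1))\<close> splits into the
  Gessel steps (0,1) and (1,1); for a descent the weights \<open>v - 1 choose h\<close> of all admissible new
  last values v add up to \<open>Suc k choose Suc h = (k choose h) + (k choose Suc h)\<close>, i.e. the steps
  (0,-1) and (-1,-1). So the weighted permutation counts obey the recurrence of walks in the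
  quadrant, and at h = 0, where every weight is 1, summing over the final balance b yields the theorem.\<close>


definition quadrant_walks :: "nat \<Rightarrow> int \<Rightarrow> int \<Rightarrow> (int \<times> int) list set" where
  "quadrant_walks n x y = {ws. length ws = n \<and> set ws \<subseteq> gessel_steps \<and>
      (\<forall>t \<le> n. fst (walk_pos (0, 0) ws t) \<ge> 0 \<and> snd (walk_pos (0, 0) ws t) \<ge> 0) \<and>
      walk_pos (0, 0) ws n = (x, y)}"

fun quadrant_walk_count :: "nat \<Rightarrow> int \<Rightarrow> int \<Rightarrow> nat" where
  "quadrant_walk_count 0 x y = (if x = 0 \<and> y = 0 then 1 else 0)"
| "quadrant_walk_count (Suc n) x y = (if x < 0 \<or> y < 0 then 0 else
     quadrant_walk_count n x (y - 1) + quadrant_walk_count n x (y + 1) +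
     quadrant_walk_count n (x - 1) (y - 1) + quadrant_walk_count n (x + 1) (y + 1))"

lemma gessel_walks_eq_quadrant_walks: "gessel_walks n 0 j = quadrant_walks n 0 (int j)"
  unfolding gessel_walks_def quadrant_walks_def by simp

lemma finite_quadrant_walks: "finite (quadrant_walks n x y)"
proof (rule finite_subset)
  show "quadrant_walks n x y \<subseteq> {ws. set ws \<subseteq> gessel_steps \<and> length ws = n}"
    unfolding quadrant_walks_def by auto
  show "finite {ws. set ws \<subseteq> gessel_steps \<and> length ws = n}"
    by (rule finite_lists_length_eq) (simp add: gessel_steps_def)
qed

lemma walk_pos_snoc:
  "walk_pos z (ws @ [s]) t = (if t \<le> length ws then walk_pos z ws t
     else (fst (walk_pos z ws (length ws)) + fst s, snd (walk_pos z ws (length ws)) + snd s))"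
  unfolding walk_pos_def by simp

lemma snoc_mem_quadrant_walks_iff:
  assumes "0 \<le> x" "0 \<le> y"
  shows "ws @ [s] \<in> quadrant_walks (Suc n) x y \<longleftrightarrow>
    s \<in> gessel_steps \<and> ws \<in> quadrant_walks n (x - fst s) (y - snd s)"
  using assms by (auto simp: quadrant_walks_def walk_pos_snoc le_Suc_eq prod_eq_iff)

lemma quadrant_walks_Suc:
  assumes "0 \<le> x" "0 \<le> y"
  shows "quadrant_walks (Suc n) x y =
    (\<Union>s\<in>gessel_steps. (\<lambda>ws. ws @ [s]) ` quadrant_walks n (x - fst s) (y - snd s))"
    (is "_ = ?R")
proof (intro equalityI subsetI)
  fix ws assume ws: "ws \<in> quadrant_walks (Suc n) x y"
  then have "ws \<noteq> []" by (auto simp: quadrant_walks_def)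
  then have ws_eq: "ws = butlast ws @ [last ws]" by simp
  with ws have "last ws \<in> gessel_steps"
    "butlast ws \<in> quadrant_walks n (x - fst (last ws)) (y - snd (last ws))"
    using snoc_mem_quadrant_walks_iff[OF assms] by metis+
  with ws_eq show "ws \<in> ?R" by blast
next
  fix ws assume "ws \<in> ?R"
  then show "ws \<in> quadrant_walks (Suc n) x y"
    using snoc_mem_quadrant_walks_iff[OF assms] by blast
qed

lemma card_quadrant_walks: "card (quadrant_walks n x y) = quadrant_walk_count n x y"
proof (induction n arbitrary: x y)
  case 0
  have "quadrant_walks 0 x y = (if x = 0 \<and> y = 0 then {[]} else {})"
    unfolding quadrant_walks_def walk_pos_def by auto
  then show ?case by simp
next
  case (Suc n)
  show ?case
  proof (cases "x < 0 \<or> y < 0")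
    case True
    then have "quadrant_walks (Suc n) x y = {}"
      unfolding quadrant_walks_def by fastforce
    with True show ?thesis by simp
  next
    case False
    then have nonneg: "0 \<le> x" "0 \<le> y" by auto
    have "card (quadrant_walks (Suc n) x y) =
        (\<Sum>s\<in>gessel_steps. card ((\<lambda>ws. ws @ [s]) ` quadrant_walks n (x - fst s) (y - snd s)))"
      unfolding quadrant_walks_Suc[OF nonneg]
      by (intro card_UN_disjoint) (auto simp: gessel_steps_def finite_quadrant_walks)
    also have "\<dots> = (\<Sum>s\<in>gessel_steps. card (quadrant_walks n (x - fst s) (y - snd s)))"
      by (intro sum.cong refl card_image) (auto simp: inj_on_def)
    also have "\<dots> = quadrant_walk_count (Suc n) x y"
      using False by (simp add: gessel_steps_def Suc.IH algebra_simps)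
    finally show ?thesis .
  qed
qed

definition shift_above :: "nat \<Rightarrow> nat \<Rightarrow> nat" where
  "shift_above v x = (if x < v then x else x + 1)"

definition append_shifted :: "nat list \<Rightarrow> nat \<Rightarrow> nat list" where
  "append_shifted q v = map (shift_above v) q @ [v]"

definition balance :: "nat list \<Rightarrow> int" where
  "balance p = int (ascents_prefix p (length p)) - int (descents_prefix p (length p))"

lemma shift_above_less_iff [simp]: "shift_above v x < shift_above v y \<longleftrightarrow> x < y"
  by (auto simp: shift_above_def)

lemma shift_above_less_self_iff [simp]: "shift_above v x < v \<longleftrightarrow> x < v"
  by (auto simp: shift_above_def)

lemma less_shift_above_iff [simp]: "v < shift_above v x \<longleftrightarrow> v \<le> x"
  by (auto simp: shift_above_def)

lemma inj_shift_above: "inj (shift_above v)"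
  by (auto simp: inj_def shift_above_def split: if_splits)

lemma shift_above_image:
  assumes "1 \<le> v" "v \<le> Suc m"
  shows "shift_above v ` {1..m} = {1..Suc m} - {v}"
proof (intro equalityI subsetI)
  fix y assume y: "y \<in> {1..Suc m} - {v}"
  show "y \<in> shift_above v ` {1..m}"
  proof (cases "y < v")
    case True
    with y assms show ?thesis by (intro image_eqI[of _ _ y]) (auto simp: shift_above_def)
  next
    case False
    with y assms show ?thesis by (intro image_eqI[of _ _ "y - 1"]) (auto simp: shift_above_def)
  qed
qed (auto simp: shift_above_def)

lemma length_append_shifted [simp]: "length (append_shifted q v) = Suc (length q)"
  by (simp add: append_shifted_def)

lemma nth_append_shifted_less: "i < length q \<Longrightarrow> append_shifted q v ! i = shift_above v (q ! i)"
  by (simp add: append_shifted_def nth_append)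

lemma nth_append_shifted_length [simp]: "append_shifted q v ! length q = v"
  by (simp add: append_shifted_def nth_append)

lemma last_append_shifted [simp]: "last (append_shifted q v) = v"
  by (simp add: append_shifted_def)

lemma append_shifted_inject: "append_shifted q v = append_shifted q' v \<Longrightarrow> q = q'"
  unfolding append_shifted_def using inj_shift_above by (simp add: inj_map_eq_map)

lemma append_shifted_permutation:
  assumes "q \<in> permutations_of_set {1..m}" "1 \<le> v" "v \<le> Suc m"
  shows "append_shifted q v \<in> permutations_of_set {1..Suc m}"
proof
  have "set q = {1..m}" "distinct q" using assms(1) by (auto dest: permutations_of_setD)
  with shift_above_image[OF assms(2,3)] inj_shift_above assms(2,3)
  show "set (append_shifted q v) = {1..Suc m}" "distinct (append_shifted q v)"
    by (auto simp: append_shifted_def distinct_map inj_on_def inj_def)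
qed

lemma permutation_eq_append_shifted:
  assumes p: "p \<in> permutations_of_set {1..Suc m}"
  obtains q where "q \<in> permutations_of_set {1..m}" "p = append_shifted q (last p)"
proof -
  have sp: "set p = {1..Suc m}" and dp: "distinct p" using p by (auto dest: permutations_of_setD)
  define v where "v = last p"
  have pne: "p \<noteq> []" using sp by auto
  have v: "1 \<le> v" "v \<le> Suc m" using last_in_set[OF pne] sp unfolding v_def by auto
  have p_eq: "p = butlast p @ [v]" using pne by (simp add: v_def)
  have "distinct (butlast p @ [v])" using dp p_eq by simp
  then have v_notin: "v \<notin> set (butlast p)" by simp
  have "set p = insert v (set (butlast p))" using arg_cong[of _ _ set, OF p_eq] by simp
  with sp v_notin have butlast_set: "set (butlast p) = {1..Suc m} - {v}" by auto
  define q where "q = map (\<lambda>x. if v < x then x - 1 else x) (butlast p)"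
  have "shift_above v (if v < x then x - 1 else x) = x" if "x \<in> set (butlast p)" for x
  proof -
    have "x \<noteq> v" "1 \<le> x" using that butlast_set by auto
    then show ?thesis by (cases "v < x") (simp_all add: shift_above_def)
  qed
  then have map_q: "map (shift_above v) q = butlast p"
    unfolding q_def map_map by (intro map_idI) simp
  have "distinct (map (shift_above v) q)" using map_q dp by (simp add: distinct_butlast)
  then have "distinct q" by (simp add: distinct_map)
  moreover have "set q = {1..m}"
  proof -
    have "shift_above v ` set q = shift_above v ` {1..m}"
      using arg_cong[of _ _ set, OF map_q] butlast_set shift_above_image[OF v] by simp
    then show ?thesis using inj_shift_above by (simp add: inj_image_eq_iff)
  qed
  ultimately have "q \<in> permutations_of_set {1..m}" by auto
  moreover have "p = append_shifted q (last p)"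
    unfolding append_shifted_def map_q v_def[symmetric] using p_eq .
  ultimately show ?thesis using that by blast
qed

lemma descents_prefix_append_shifted:
  "i \<le> length q \<Longrightarrow> descents_prefix (append_shifted q v) i = descents_prefix q i"
  unfolding descents_prefix_def
  by (rule arg_cong[where f = card], rule Collect_cong) (auto simp: nth_append_shifted_less)

lemma ascents_prefix_append_shifted:
  "i \<le> length q \<Longrightarrow> ascents_prefix (append_shifted q v) i = ascents_prefix q i"
  unfolding ascents_prefix_def
  by (rule arg_cong[where f = card], rule Collect_cong) (auto simp: nth_append_shifted_less)

lemma card_prefix_indices_Suc:
  "card {j. j + 1 < Suc i \<and> P j} = card {j. j + 1 < i \<and> P j} + (if 0 < i \<and> P (i - 1) then 1 else 0)"
proof (cases i)
  case (Suc i')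
  have "{j. j + 1 < Suc i \<and> P j} = {j. j + 1 < i \<and> P j} \<union> (if P i' then {i'} else {})"
    using Suc by (auto simp: less_Suc_eq)
  moreover have "finite {j. j + 1 < i \<and> P j}" by (rule finite_subset[of _ "{..<i}"]) auto
  ultimately show ?thesis using Suc by auto
qed simp

lemma descents_prefix_Suc:
  "descents_prefix p (Suc i) = descents_prefix p i + (if 0 < i \<and> p ! (i - 1) > p ! i then 1 else 0)"
  unfolding descents_prefix_def using card_prefix_indices_Suc[of i "\<lambda>j. p ! j > p ! (j + 1)"]
  by (cases i) auto

lemma ascents_prefix_Suc:
  "ascents_prefix p (Suc i) = ascents_prefix p i + (if 0 < i \<and> p ! (i - 1) < p ! i then 1 else 0)"
  unfolding ascents_prefix_def using card_prefix_indices_Suc[of i "\<lambda>j. p ! j < p ! (j + 1)"]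
  by (cases i) auto

lemma ascents_prefix_le: "ascents_prefix p i \<le> i - 1"
proof -
  have "ascents_prefix p i \<le> card {..<i - 1}"
    unfolding ascents_prefix_def by (intro card_mono) auto
  then show ?thesis by simp
qed

lemma balance_le: "balance p \<le> int (length p - 1)"
  unfolding balance_def using ascents_prefix_le[of p "length p"] by simp

lemma is_ballot_imp_balance_nonneg: "is_ballot p \<Longrightarrow> 0 \<le> balance p"
  unfolding is_ballot_def balance_def by auto

lemma balance_append_shifted:
  assumes "q \<noteq> []"
  shows "balance (append_shifted q v) = balance q + (if last q < v then 1 else -1)"
proof -
  let ?m = "length q"
  have last_q: "append_shifted q v ! (?m - 1) = shift_above v (last q)"
    using assms by (simp add: nth_append_shifted_less last_conv_nth)
  have "descents_prefix (append_shifted q v) (Suc ?m) = descents_prefix q ?m + (if v \<le> last q then 1 else 0)"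
    using descents_prefix_Suc[of "append_shifted q v" ?m] assms last_q
    by (simp add: descents_prefix_append_shifted)
  moreover have "ascents_prefix (append_shifted q v) (Suc ?m) = ascents_prefix q ?m + (if last q < v then 1 else 0)"
    using ascents_prefix_Suc[of "append_shifted q v" ?m] assms last_q
    by (simp add: ascents_prefix_append_shifted)
  ultimately show ?thesis unfolding balance_def by auto
qed

lemma is_ballot_append_shifted_iff:
  "is_ballot (append_shifted q v) \<longleftrightarrow> is_ballot q \<and> 0 \<le> balance (append_shifted q v)"
  unfolding is_ballot_def balance_def
  by (auto simp: le_Suc_eq descents_prefix_append_shifted ascents_prefix_append_shifted)

lemma contains_213_append_shifted_imp:
  assumes dq: "distinct q" and qne: "q \<noteq> []" and c: "contains_213 (append_shifted q v)"
  shows "contains_213 q \<or> Suc (last q) < v"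
proof -
  define m where "m = length q"
  have last_q: "q ! (m - 1) = last q" using qne by (simp add: m_def last_conv_nth)
  obtain i j k where ijk: "i < j" "j < k" "k < Suc m"
    and pat: "append_shifted q v ! j < append_shifted q v ! i" "append_shifted q v ! i < append_shifted q v ! k"
    using c unfolding contains_213_def m_def by auto
  show ?thesis
  proof (cases "k < m")
    case True
    then have "q ! j < q ! i" "q ! i < q ! k" using pat ijk by (auto simp: nth_append_shifted_less m_def)
    with ijk True show ?thesis unfolding contains_213_def m_def by blast
  next
    case False
    then have "k = m" using ijk by simp
    then have a: "q ! j < q ! i" "q ! i < v" using pat ijk by (auto simp: nth_append_shifted_less m_def)
    have "q ! i \<noteq> last q"
      using nth_eq_iff_index_eq[OF dq, of i "m - 1"] last_q ijk \<open>k = m\<close> by (auto simp: m_def)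
    then consider "q ! i < last q" | "last q < q ! i" by linarith
    then show ?thesis
    proof cases
      case 1
      \<comment> \<open>the entry \<open>last q\<close> plays the role of the 3\<close>
      with a last_q have "j \<noteq> m - 1" by auto
      with ijk \<open>k = m\<close> have "j < m - 1" by simp
      with ijk a 1 last_q have "contains_213 q"
        unfolding contains_213_def by (intro exI[of _ i] exI[of _ j] exI[of _ "m - 1"]) (auto simp: m_def)
      then show ?thesis ..
    next
      case 2
      with a show ?thesis by simp
    qed
  qed
qed

lemma contains_213_append_shifted_if_prefix:
  assumes "contains_213 q"
  shows "contains_213 (append_shifted q v)"
proof -
  obtain i j k where "i < j" "j < k" "k < length q" "q ! j < q ! i" "q ! i < q ! k"
    using assms unfolding contains_213_def by blast
  then show ?thesis
    unfolding contains_213_def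
    by (intro exI[of _ i] exI[of _ j] exI[of _ k]) (simp add: nth_append_shifted_less)
qed

lemma contains_213_append_shifted_if_gap:
  assumes q: "q \<in> permutations_of_set {1..m}" and v: "v \<le> Suc m" and gap: "Suc (last q) < v"
  shows "contains_213 (append_shifted q v)"
proof -
  have sq: "set q = {1..m}" using q by (rule permutations_of_setD)
  have lq: "length q = m" using length_finite_permutations_of_set[OF q] by simp
  with gap v have qne: "q \<noteq> []" by auto
  \<comment> \<open>the value \<open>last q + 1\<close>, which still lies below v, occurs earlier in q\<close>
  have "Suc (last q) \<in> set q" using sq gap v by auto
  then obtain i where i: "i < m" "q ! i = Suc (last q)" using lq by (auto simp: in_set_conv_nth)
  have last_q: "q ! (m - 1) = last q" using qne lq by (simp add: last_conv_nth)
  with i have "i \<noteq> m - 1" by auto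
  with i have "i < m - 1" by simp
  then show ?thesis
    unfolding contains_213_def using gap i last_q lq
    by (intro exI[of _ i] exI[of _ "m - 1"] exI[of _ m])
       (auto simp: nth_append_shifted_less nth_append_shifted_length[of q v, unfolded lq] shift_above_def)
qed

lemma contains_213_append_shifted_iff:
  assumes "q \<in> permutations_of_set {1..m}" "1 \<le> m" "v \<le> Suc m"
  shows "contains_213 (append_shifted q v) \<longleftrightarrow> contains_213 q \<or> Suc (last q) < v"
proof -
  have "distinct q" "q \<noteq> []"
    using assms(1,2) length_finite_permutations_of_set[OF assms(1)] by (auto dest: permutations_of_setD)
  then show ?thesis
    using assms contains_213_append_shifted_imp contains_213_append_shifted_if_prefix
      contains_213_append_shifted_if_gap by blast
qed

text \<open>Permutations of [n+1] are indexed by n, the length of the corresponding walks.\<close>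
definition ballot_213_ending :: "nat \<Rightarrow> nat \<Rightarrow> int \<Rightarrow> nat list set" where
  "ballot_213_ending n k b = {p \<in> ballot_perms_213 (Suc n). last p = k \<and> balance p = b}"

fun ballot_213_count :: "nat \<Rightarrow> nat \<Rightarrow> int \<Rightarrow> nat" where
  "ballot_213_count 0 k b = (if k = 1 \<and> b = 0 then 1 else 0)"
| "ballot_213_count (Suc n) k b = (if b < 0 \<or> k = 0 \<or> n + 2 < k then 0 else
     (if 2 \<le> k then ballot_213_count n (k - 1) (b - 1) else 0) +
     (\<Sum>k'\<le>n. if k \<le> Suc k' then ballot_213_count n (Suc k') (b + 1) else 0))"

lemma last_in_permutations_of_set:
  assumes "p \<in> permutations_of_set A" "A \<noteq> {}"
  shows "last p \<in> A"
proof -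
  have "set p = A" using assms(1) by (rule permutations_of_setD)
  with assms(2) show ?thesis using last_in_set[of p] by auto
qed

lemma ballot_213_ending_subset: "ballot_213_ending n k b \<subseteq> permutations_of_set {1..Suc n}"
  by (auto simp: ballot_213_ending_def ballot_perms_213_def ballot_perms_def)

lemma finite_ballot_213_ending: "finite (ballot_213_ending n k b)"
  using ballot_213_ending_subset finite_permutations_of_set by (rule finite_subset)

lemma ballot_213_ending_unique:
  "p \<in> ballot_213_ending n k b \<Longrightarrow> p \<in> ballot_213_ending n k' b' \<Longrightarrow> k = k' \<and> b = b'"
  by (auto simp: ballot_213_ending_def)

lemma ballot_213_ending_eq_empty:
  assumes "b < 0 \<or> k = 0 \<or> Suc n < k"
  shows "ballot_213_ending n k b = {}"
proof -
  have "k \<in> {1..Suc n} \<and> 0 \<le> b" if "p \<in> ballot_213_ending n k b" for p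
  proof -
    have "set p = {1..Suc n}" "is_ballot p" "last p = k" "balance p = b"
      using that by (auto simp: ballot_213_ending_def ballot_perms_213_def ballot_perms_def
          dest: permutations_of_setD)
    then show ?thesis using last_in_set[of p] is_ballot_imp_balance_nonneg by fastforce
  qed
  with assms show ?thesis by fastforce
qed

lemma ballot_213_ending_0: "ballot_213_ending 0 k b = (if k = 1 \<and> b = 0 then {[1]} else {})"
proof -
  have "is_ballot [1]" "balance [1] = 0"
    unfolding is_ballot_def balance_def descents_prefix_def ascents_prefix_def by auto
  moreover have "\<not> contains_213 [1]" unfolding contains_213_def by auto
  ultimately show ?thesis
    by (auto simp: ballot_213_ending_def ballot_perms_213_def ballot_perms_def)
qed

lemma append_shifted_mem_ballot_213_ending_iff:
  assumes q: "q \<in> permutations_of_set {1..Suc n}" and k: "1 \<le> k" "k \<le> Suc (Suc n)"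
  shows "append_shifted q k \<in> ballot_213_ending (Suc n) k b \<longleftrightarrow>
    q \<in> ballot_perms_213 (Suc n) \<and> k \<le> Suc (last q) \<and> 0 \<le> b \<and>
    b = balance q + (if last q < k then 1 else -1)"
proof -
  have "q \<noteq> []" using length_finite_permutations_of_set[OF q] by auto
  then show ?thesis
    using q append_shifted_permutation[OF q k] contains_213_append_shifted_iff[OF q _ k(2)]
      is_ballot_append_shifted_iff[of q k] balance_append_shifted[of q k]
    by (auto simp: ballot_213_ending_def ballot_perms_213_def ballot_perms_def)
qed

lemma ballot_213_ending_Suc:
  assumes b: "0 \<le> b" and k: "1 \<le> k" "k \<le> Suc (Suc n)"
  shows "ballot_213_ending (Suc n) k b = (\<lambda>q. append_shifted q k) `
    ((if 2 \<le> k then ballot_213_ending n (k - 1) (b - 1) else {}) \<union>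
     (\<Union>k'\<in>{k'. k' \<le> n \<and> k \<le> Suc k'}. ballot_213_ending n (Suc k') (b + 1)))"
    (is "_ = _ ` (?A \<union> ?U)")
proof (intro equalityI subsetI)
  fix p assume p: "p \<in> ballot_213_ending (Suc n) k b"
  then have "p \<in> permutations_of_set {1..Suc (Suc n)}" "last p = k"
    using ballot_213_ending_subset by (auto simp: ballot_213_ending_def)
  then obtain q where q: "q \<in> permutations_of_set {1..Suc n}" and p_eq: "p = append_shifted q k"
    using permutation_eq_append_shifted by metis
  have last_q: "last q \<in> {1..Suc n}"
    using q by (rule last_in_permutations_of_set) simp
  have q_props: "q \<in> ballot_perms_213 (Suc n)" "k \<le> Suc (last q)"
    "b = balance q + (if last q < k then 1 else -1)"
    using p append_shifted_mem_ballot_213_ending_iff[OF q k] p_eq by auto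
  have "q \<in> ?A \<union> ?U"
  proof (cases "last q < k")
    case True
    with last_q q_props have "q \<in> ?A" by (auto simp: ballot_213_ending_def)
    then show ?thesis ..
  next
    case False
    with last_q q_props have "q \<in> ballot_213_ending n (Suc (last q - 1)) (b + 1)"
      "last q - 1 \<in> {k'. k' \<le> n \<and> k \<le> Suc k'}"
      by (auto simp: ballot_213_ending_def)
    then show ?thesis by blast
  qed
  with p_eq show "p \<in> (\<lambda>q. append_shifted q k) ` (?A \<union> ?U)" by blast
next
  fix p assume "p \<in> (\<lambda>q. append_shifted q k) ` (?A \<union> ?U)"
  then obtain q where q: "q \<in> ?A \<union> ?U" and p_eq: "p = append_shifted q k" by blast
  then have perm: "q \<in> permutations_of_set {1..Suc n}"
    using ballot_213_ending_subset by (auto split: if_splits)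
  have "q \<in> ballot_perms_213 (Suc n) \<and> k \<le> Suc (last q) \<and> 0 \<le> b \<and>
      b = balance q + (if last q < k then 1 else -1)"
    using q b by (auto simp: ballot_213_ending_def split: if_splits)
  then show "p \<in> ballot_213_ending (Suc n) k b"
    unfolding p_eq using append_shifted_mem_ballot_213_ending_iff[OF perm k] by blast
qed

lemma card_ballot_213_ending: "card (ballot_213_ending n k b) = ballot_213_count n k b"
proof (induction n arbitrary: k b)
  case 0
  then show ?case by (simp add: ballot_213_ending_0)
next
  case (Suc n)
  show ?case
  proof (cases "b < 0 \<or> k = 0 \<or> n + 2 < k")
    case True
    then show ?thesis by (simp add: ballot_213_ending_eq_empty)
  next
    case False
    define A where "A = (if 2 \<le> k then ballot_213_ending n (k - 1) (b - 1) else {})"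
    define K where "K = {k'. k' \<le> n \<and> k \<le> Suc k'}"
    define U where "U = (\<Union>k'\<in>K. ballot_213_ending n (Suc k') (b + 1))"
    have "card (ballot_213_ending (Suc n) k b) = card (A \<union> U)"
      using False unfolding A_def U_def K_def
      by (subst ballot_213_ending_Suc) (auto intro!: card_image simp: inj_on_def dest: append_shifted_inject)
    also have "\<dots> = card A + card U"
      by (rule card_Un_disjoint)
        (auto simp: A_def U_def K_def finite_ballot_213_ending dest: ballot_213_ending_unique)
    also have "card U = (\<Sum>k'\<in>K. card (ballot_213_ending n (Suc k') (b + 1)))"
      unfolding U_def
      by (rule card_UN_disjoint) (auto simp: K_def finite_ballot_213_ending dest: ballot_213_ending_unique)
    also have "\<dots> = (\<Sum>k'\<le>n. if k \<le> Suc k' then ballot_213_count n (Suc k') (b + 1) else 0)"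
      unfolding K_def Suc.IH by (simp add: sum.inter_filter[symmetric] atMost_def conj_commute)
    also have "card A = (if 2 \<le> k then ballot_213_count n (k - 1) (b - 1) else 0)"
      by (simp add: A_def Suc.IH)
    finally show ?thesis using False by simp
  qed
qed

lemma ballot_perms_213_eq_UN:
  "ballot_perms_213 (Suc n) = (\<Union>b\<in>{0..int n}. \<Union>k\<le>n. ballot_213_ending n (Suc k) b)"
proof (intro equalityI subsetI)
  fix p assume p: "p \<in> ballot_perms_213 (Suc n)"
  then have perm: "p \<in> permutations_of_set {1..Suc n}" and "is_ballot p"
    by (auto simp: ballot_perms_213_def ballot_perms_def)
  then have "balance p \<in> {0..int n}"
    using is_ballot_imp_balance_nonneg balance_le[of p] length_finite_permutations_of_set[OF perm]
    by auto
  moreover have "last p = Suc (last p - 1)" "last p - 1 \<le> n"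
    using last_in_permutations_of_set[OF perm] by auto
  ultimately show "p \<in> (\<Union>b\<in>{0..int n}. \<Union>k\<le>n. ballot_213_ending n (Suc k) b)"
    using p unfolding ballot_213_ending_def by (intro UN_I[of "balance p"] UN_I[of "last p - 1"]) auto
qed (auto simp: ballot_213_ending_def)

lemma card_ballot_perms_213:
  "card (ballot_perms_213 (Suc n)) = (\<Sum>b\<in>{0..int n}. \<Sum>k\<le>n. ballot_213_count n (Suc k) b)"
proof -
  have "card (ballot_perms_213 (Suc n)) = (\<Sum>b\<in>{0..int n}. card (\<Union>k\<le>n. ballot_213_ending n (Suc k) b))"
    unfolding ballot_perms_213_eq_UN
    by (rule card_UN_disjoint) (auto simp: finite_ballot_213_ending dest: ballot_213_ending_unique)
  also have "\<dots> = (\<Sum>b\<in>{0..int n}. \<Sum>k\<le>n. card (ballot_213_ending n (Suc k) b))"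
    by (intro sum.cong refl card_UN_disjoint) (auto simp: finite_ballot_213_ending dest: ballot_213_ending_unique)
  finally show ?thesis by (simp add: card_ballot_213_ending)
qed

lemma sum_choose_upper_bounded:
  "(\<Sum>v\<le>m. if v \<le> k then v choose h else 0) = Suc (min k m) choose Suc h"
proof -
  have "(\<Sum>v\<le>m. if v \<le> k then v choose h else 0) = (\<Sum>v\<in>{v. v \<le> m \<and> v \<le> k}. v choose h)"
    by (simp add: sum.inter_filter[symmetric] atMost_def)
  also have "{v. v \<le> m \<and> v \<le> k} = {..min k m}" by auto
  finally show ?thesis by (simp add: sum_choose_upper)
qed

lemma ballot_213_count_Suc_weighted:
  assumes "0 \<le> b"
  shows "(\<Sum>v\<le>Suc n. ballot_213_count (Suc n) (Suc v) b * (v choose h)) =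
    (\<Sum>k\<le>n. ballot_213_count n (Suc k) (b - 1) * (Suc k choose h)) +
    (\<Sum>k\<le>n. ballot_213_count n (Suc k) (b + 1) * (Suc k choose Suc h))"
proof -
  define P where "P k = ballot_213_count n (Suc k) (b + 1)" for k
  define Q where "Q k = ballot_213_count n (Suc k) (b - 1)" for k
  have "ballot_213_count (Suc n) (Suc v) b * (v choose h) =
      (if 1 \<le> v then Q (v - 1) else 0) * (v choose h) +
      (\<Sum>k\<le>n. (if v \<le> k then P k else 0) * (v choose h))" if "v \<le> Suc n" for v
    using assms that unfolding P_def Q_def by (cases v) (simp_all add: sum_distrib_right distrib_right)
  then have "(\<Sum>v\<le>Suc n. ballot_213_count (Suc n) (Suc v) b * (v choose h)) =
      (\<Sum>v\<le>Suc n. (if 1 \<le> v then Q (v - 1) else 0) * (v choose h)) +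
      (\<Sum>v\<le>Suc n. \<Sum>k\<le>n. (if v \<le> k then P k else 0) * (v choose h))"
    by (simp add: sum.distrib)
  also have "(\<Sum>v\<le>Suc n. (if 1 \<le> v then Q (v - 1) else 0) * (v choose h)) =
      (\<Sum>k\<le>n. Q k * (Suc k choose h))"
    by (subst sum.atMost_Suc_shift) simp
  also have "(\<Sum>v\<le>Suc n. \<Sum>k\<le>n. (if v \<le> k then P k else 0) * (v choose h)) =
      (\<Sum>k\<le>n. P k * (\<Sum>v\<le>Suc n. if v \<le> k then v choose h else 0))"
    by (subst sum.swap) (auto simp: sum_distrib_left intro!: sum.cong)
  also have "\<dots> = (\<Sum>k\<le>n. P k * (Suc k choose Suc h))"
    by (intro sum.cong refl) (simp add: sum_choose_upper_bounded min_absorb1)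
  finally show ?thesis by (simp add: P_def Q_def)
qed

lemma quadrant_walk_count_eq_weighted_sum:
  "quadrant_walk_count n (int h) b = (\<Sum>k\<le>n. ballot_213_count n (Suc k) b * (k choose h))"
proof (induction n arbitrary: h b)
  case 0
  then show ?case by simp
next
  case (Suc n)
  show ?case
  proof (cases "b < 0")
    case True
    then show ?thesis by (cases n) simp_all
  next
    case False
    let ?P = "\<lambda>k. ballot_213_count n (Suc k) (b + 1)" and ?Q = "\<lambda>k. ballot_213_count n (Suc k) (b - 1)"
    have up: "quadrant_walk_count n (int h) (b - 1) + quadrant_walk_count n (int h - 1) (b - 1) =
        (\<Sum>k\<le>n. ?Q k * (Suc k choose h))"
    proof (cases h)
      case 0
      then show ?thesis using Suc.IH[of 0 "b - 1"] by (cases n) simp_all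
    next
      case (Suc h')
      then have "int h - 1 = int h'" by simp
      then show ?thesis using Suc Suc.IH[of h "b - 1"] Suc.IH[of h' "b - 1"]
        by (simp add: sum.distrib[symmetric] algebra_simps)
    qed
    have down: "quadrant_walk_count n (int h) (b + 1) + quadrant_walk_count n (int (Suc h)) (b + 1) =
        (\<Sum>k\<le>n. ?P k * (Suc k choose Suc h))"
      using Suc.IH[of h "b + 1"] Suc.IH[of "Suc h" "b + 1"]
      by (simp add: sum.distrib[symmetric] algebra_simps)
    have "quadrant_walk_count (Suc n) (int h) b =
        (quadrant_walk_count n (int h) (b - 1) + quadrant_walk_count n (int h - 1) (b - 1)) +
        (quadrant_walk_count n (int h) (b + 1) + quadrant_walk_count n (int (Suc h)) (b + 1))"
      using False by (simp add: algebra_simps)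
    also have "\<dots> = (\<Sum>v\<le>Suc n. ballot_213_count (Suc n) (Suc v) b * (v choose h))"
      unfolding up down using False by (intro ballot_213_count_Suc_weighted[symmetric]) simp
    finally show ?thesis .
  qed
qed

theorem theorem1p4:
  fixes n :: nat
  shows "card (ballot_perms_213 (n + 1)) = (\<Sum>j = 0..n. card (gessel_walks n 0 j))"
proof -
  have "card (ballot_perms_213 (n + 1)) = (\<Sum>b\<in>{0..int n}. \<Sum>k\<le>n. ballot_213_count n (Suc k) b)"
    by (simp add: card_ballot_perms_213)
  also have "\<dots> = (\<Sum>j = 0..n. \<Sum>k\<le>n. ballot_213_count n (Suc k) (int j))"
    by (subst image_int_atLeastAtMost[symmetric, of 0 n, simplified], subst sum.reindex) auto
  also have "\<dots> = (\<Sum>j = 0..n. card (gessel_walks n 0 j))"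
    using quadrant_walk_count_eq_weighted_sum[of n 0]
    by (simp add: gessel_walks_eq_quadrant_walks card_quadrant_walks)
  finally show ?thesis .
qed

end
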